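(* Let $f^*:[0,1]\to\mathbb{R}$ be any function, let $S=\{(x_i,y_i)\}_{i=1}^n$ with $0<x_1<x_2<\dots<x_n<1$, and let $\hat f_S$ be the minimum-norm interpolating two-layer ReLU network for $S$ (defined in the context). Then for any $i\in\{2,\dots,n-2\}$ and $x\in[x_i,x_{i+1})$, \[ |\hat f_S(x)-f^*(x)|\le\max\left\{|g_i(x)-f^*(x)|,\ \min\{|g_{i+1}(x)-f^*(x)|,|g_{i-1}(x)-f^*(x)|\}\right\}; \] for $x\in[0,x_2)$, $|\hat f_S(x)-f^*(x)|=|g_1(x)-f^*(x)|$; and for $x\in[x_{n-1},1]$, $|\hat f_S(x)-f^*(x)|=|g_{n-1}(x)-f^*(x)|$.
   Context: A two-layer ReLU network with skip connection is $f_{\theta,a_0,b_0}(x)=\sum_{j=1}^m a_j(w_jx+b_j)_++a_0x+b_0$ with $\theta=\{a_j,w_j,b_j\}_{j=1}^m\in\mathbb{R}^{3m}$ and arbitrary width $m$. The min-norm interpolator $\hat f_S$ is the (unique) minimizer of $\|\theta\|_2^2$ over all $m,\theta,a_0,b_0$ subject to $f_{\theta,a_0,b_0}(x_i)=y_i$ for all $i\in[n]$ (the weights $a_0,b_0$ are not penalized). For $i\in[n-1]$, $g_i$ denotes the affine function through $(x_i,y_i)$ and $(x_{i+1},y_{i+1})$. *)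

theory Defs
  imports Complex_Main
begin

text \<open>A two-layer ReLU network with skip connection; the hidden units are given as a
  list of triples (a_j, w_j, b_j), so the width m is the length of the list.\<close>
definition relu_net :: "(real \<times> real \<times> real) list \<Rightarrow> real \<Rightarrow> real \<Rightarrow> real \<Rightarrow> real" where
  "relu_net \<theta> a0 b0 t = (\<Sum>(a, w, b) \<leftarrow> \<theta>. a * max 0 (w * t + b)) + a0 * t + b0"

definition param_norm2 :: "(real \<times> real \<times> real) list \<Rightarrow> real" where
  "param_norm2 \<theta> = (\<Sum>(a, w, b) \<leftarrow> \<theta>. a\<^sup>2 + w\<^sup>2 + b\<^sup>2)"

definition interpolates ::
  "nat \<Rightarrow> (nat \<Rightarrow> real) \<Rightarrow> (nat \<Rightarrow> real) \<Rightarrow> (real \<times> real \<times> real) list \<Rightarrow> real \<Rightarrow> real \<Rightarrow> bool" where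
  "interpolates n xs ys \<theta> a0 b0 \<longleftrightarrow> (\<forall>i\<in>{1..n}. relu_net \<theta> a0 b0 (xs i) = ys i)"

definition min_norm_interpolant ::
  "nat \<Rightarrow> (nat \<Rightarrow> real) \<Rightarrow> (nat \<Rightarrow> real) \<Rightarrow> (real \<Rightarrow> real) \<Rightarrow> bool" where
  "min_norm_interpolant n xs ys f \<longleftrightarrow>
     (\<exists>\<theta> a0 b0. interpolates n xs ys \<theta> a0 b0 \<and> f = relu_net \<theta> a0 b0 \<and>
        (\<forall>\<theta>' a0' b0'. interpolates n xs ys \<theta>' a0' b0' \<longrightarrow> param_norm2 \<theta> \<le> param_norm2 \<theta>'))"

definition seg_line :: "(nat \<Rightarrow> real) \<Rightarrow> (nat \<Rightarrow> real) \<Rightarrow> nat \<Rightarrow> real \<Rightarrow> real" where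
  "seg_line xs ys i t = ys i + (ys (Suc i) - ys i) / (xs (Suc i) - xs i) * (t - xs i)"

end

theory Submission
  imports Defs "HOL-Analysis.Convex"
begin

text \<open>
  Up to an affine function a network is a linear spline \<open>\<Sum>\<sigma>. J \<sigma> * max 0 (x - \<sigma>)\<close>, and a
  neuron realising the kink \<open>c * max 0 (x - \<sigma>)\<close> has squared norm at least
  \<open>2 * \<bar>c\<bar> * sqrt (1 + \<sigma>\<^sup>2)\<close>, with equality for a balanced neuron. As the skip connection absorbs
  affine functions, the minimum-norm interpolant is an affine function plus a spline minimising the
  weighted variation \<open>\<Sum>\<sigma>. \<bar>J \<sigma>\<bar> * sqrt (1 + \<sigma>\<^sup>2)\<close> among all splines that agree with it on the
  data up to an affine function.

  No local perturbation of such a spline lowers this cost: deleting a kink outside the data hull,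
  moving a kink in the first or last gap onto the adjacent data point, or replacing a kink by its
  chord interpolation between nearby kinks, where a kink of opposite sign absorbs part of the cost.
  Since the data lie in (0, 1), every gap is shorter than 1, and these moves show that all kinks
  lie in [x_2, x_(n-1)] and that the kinks in (x_(i-1), x_(i+1)) all have the same sign. So on a
  cell [x_i, x_(i+1)] the interpolant is convex on [x_(i-1), x_(i+2)], concave there, or affine on
  the cell. In the first two cases it lies between the secant g_i and the extended secants g_(i-1)
  and g_(i+1), which gives the bound; left of x_2 and right of x_(n-1) it is affine.
\<close>

section \<open>Kink weights and splines\<close>

definition kink_weight :: "real \<Rightarrow> real" where
  "kink_weight \<sigma> = sqrt (1 + \<sigma>\<^sup>2)"

lemma one_le_kink_weight: "1 \<le> kink_weight \<sigma>"
  unfolding kink_weight_def by simp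

lemma kink_weight_pos: "0 < kink_weight \<sigma>"
  using one_le_kink_weight[of \<sigma>] by linarith

lemma kink_weight_squared: "(kink_weight \<sigma>)\<^sup>2 = 1 + \<sigma>\<^sup>2"
  unfolding kink_weight_def by simp

lemma kink_weight_diff_le: "kink_weight a - kink_weight b \<le> \<bar>a - b\<bar>"
proof -
  have "\<bar>b\<bar> \<le> kink_weight b"
    unfolding kink_weight_def by (rule real_le_rsqrt) simp
  then have "(a - b) * b \<le> \<bar>a - b\<bar> * kink_weight b"
    by (metis abs_ge_self abs_mult abs_ge_zero mult_left_mono order_trans)
  then have "1 + a\<^sup>2 \<le> (kink_weight b + \<bar>a - b\<bar>)\<^sup>2"
    by (simp add: power2_eq_square algebra_simps kink_weight_squared[unfolded power2_eq_square])
  then have "kink_weight a \<le> kink_weight b + \<bar>a - b\<bar>"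
    unfolding kink_weight_def[of a] using kink_weight_pos[of b] by (intro real_le_lsqrt) auto
  then show ?thesis by simp
qed

lemma kink_weight_mono: "0 \<le> a \<Longrightarrow> a \<le> b \<Longrightarrow> kink_weight a \<le> kink_weight b"
  unfolding kink_weight_def by (simp add: power_mono)

lemma kink_weight_rescaled_lt:
  assumes "0 \<le> u" "u < \<tau>" "\<tau> < v"
  shows "(\<tau> - u) / (v - u) * kink_weight v < kink_weight \<tau>"
proof -
  have key: "(v - u)\<^sup>2 * (1 + \<tau>\<^sup>2) - (\<tau> - u)\<^sup>2 * (1 + v\<^sup>2)
      = (v - \<tau>) * ((v - u) + (\<tau> - u) + u * ((v - u) * \<tau> + (\<tau> - u) * v))"
    by (simp add: algebra_simps power2_eq_square)
  have "0 \<le> u * ((v - u) * \<tau> + (\<tau> - u) * v)"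
    using assms by (intro mult_nonneg_nonneg add_nonneg_nonneg) auto
  then have "0 < (v - \<tau>) * ((v - u) + (\<tau> - u) + u * ((v - u) * \<tau> + (\<tau> - u) * v))"
    using assms by (intro mult_pos_pos) linarith+
  then have "((\<tau> - u) * kink_weight v)\<^sup>2 < ((v - u) * kink_weight \<tau>)\<^sup>2"
    unfolding power_mult_distrib kink_weight_squared using key by linarith
  moreover have "0 \<le> (v - u) * kink_weight \<tau>"
    using assms kink_weight_pos[of \<tau>] by simp
  ultimately have "(\<tau> - u) * kink_weight v < (v - u) * kink_weight \<tau>"
    by (rule power_less_imp_less_base)
  then show ?thesis
    using assms by (simp add: mult.commute mult_imp_div_pos_less)
qed

lemma kink_weight_chord_lt:
  assumes "a < \<tau>" "\<tau> < b" "b - a < 1"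
  shows "(b - \<tau>) / (b - a) * kink_weight a < kink_weight \<tau>"
    and "(\<tau> - a) / (b - a) * kink_weight b < kink_weight \<tau>"
proof -
  define l l' where "l = (b - \<tau>) / (b - a)" and "l' = (\<tau> - a) / (b - a)"
  have l: "l + l' = 1" "0 < l" "0 < l'"
    using assms unfolding l_def l'_def by (simp_all add: add_divide_distrib[symmetric])
  have l_1: "l = 1 - l'"
    using l(1) by simp
  have "kink_weight a - kink_weight \<tau> \<le> l' * (b - a)"
    using kink_weight_diff_le[of a \<tau>] assms unfolding l'_def by simp
  also have "\<dots> < l' * kink_weight a"
    using assms l one_le_kink_weight[of a] by (intro mult_strict_left_mono) auto
  finally show "l * kink_weight a < kink_weight \<tau>"
    unfolding l_1 by (simp add: algebra_simps)
  have "kink_weight b - kink_weight \<tau> \<le> l * (b - a)"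
    using kink_weight_diff_le[of b \<tau>] assms unfolding l_def by simp
  also have "\<dots> < l * kink_weight b"
    using assms l one_le_kink_weight[of b] by (intro mult_strict_left_mono) auto
  finally show "l' * kink_weight b < kink_weight \<tau>"
    unfolding l_1 by (simp add: algebra_simps)
qed

definition spline :: "(real \<Rightarrow> real) \<Rightarrow> real set \<Rightarrow> real \<Rightarrow> real" where
  "spline J S x = (\<Sum>\<sigma>\<in>S. J \<sigma> * max 0 (x - \<sigma>))"

definition spline_cost :: "(real \<Rightarrow> real) \<Rightarrow> real set \<Rightarrow> real" where
  "spline_cost J S = (\<Sum>\<sigma>\<in>S. \<bar>J \<sigma>\<bar> * kink_weight \<sigma>)"

lemma spline_uminus: "spline (\<lambda>\<sigma>. - J \<sigma>) S x = - spline J S x"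
  unfolding spline_def by (simp add: sum_negf)

lemma spline_left_of_kinks:
  assumes "\<And>\<sigma>. J \<sigma> \<noteq> 0 \<Longrightarrow> a \<le> \<sigma>" and "x \<le> a"
  shows "spline J S x = 0"
  unfolding spline_def using assms by (intro sum.neutral) force

lemma spline_right_of_kinks:
  assumes "\<And>\<sigma>. J \<sigma> \<noteq> 0 \<Longrightarrow> \<sigma> \<le> a" and "a \<le> x"
  shows "spline J S x = (\<Sum>\<sigma>\<in>S. J \<sigma>) * x - (\<Sum>\<sigma>\<in>S. J \<sigma> * \<sigma>)"
proof -
  have "J \<sigma> * max 0 (x - \<sigma>) = J \<sigma> * x - J \<sigma> * \<sigma>" for \<sigma>
  proof (cases "J \<sigma> = 0")
    case False
    then have "max 0 (x - \<sigma>) = x - \<sigma>"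
      using assms by force
    then show ?thesis
      by (simp add: algebra_simps)
  qed simp
  then show ?thesis
    unfolding spline_def by (simp add: sum_subtractf sum_distrib_right)
qed

lemma spline_add_kinks:
  fixes J d :: "real \<Rightarrow> real"
  assumes S: "finite S" and P: "finite P" and supp: "\<forall>\<sigma>. \<sigma> \<notin> S \<longrightarrow> J \<sigma> = 0"
  defines "J' \<equiv> \<lambda>\<sigma>. J \<sigma> + (if \<sigma> \<in> P then d \<sigma> else 0)"
  shows "spline J' (S \<union> P) x = spline J S x + (\<Sum>\<sigma>\<in>P. d \<sigma> * max 0 (x - \<sigma>))"
    and "spline_cost J' (S \<union> P)
      = spline_cost J S + (\<Sum>\<sigma>\<in>P. (\<bar>J \<sigma> + d \<sigma>\<bar> - \<bar>J \<sigma>\<bar>) * kink_weight \<sigma>)"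
proof -
  have SP: "finite (S \<union> P)"
    using S P by simp
  have "spline J' (S \<union> P) x = (\<Sum>\<sigma>\<in>S \<union> P. J \<sigma> * max 0 (x - \<sigma>))
      + (\<Sum>\<sigma>\<in>S \<union> P. (if \<sigma> \<in> P then d \<sigma> else 0) * max 0 (x - \<sigma>))"
    unfolding spline_def J'_def by (simp add: distrib_right sum.distrib)
  also have "(\<Sum>\<sigma>\<in>S \<union> P. J \<sigma> * max 0 (x - \<sigma>)) = spline J S x"
    unfolding spline_def using SP supp by (intro sum.mono_neutral_right) auto
  also have "(\<Sum>\<sigma>\<in>S \<union> P. (if \<sigma> \<in> P then d \<sigma> else 0) * max 0 (x - \<sigma>))
      = (\<Sum>\<sigma>\<in>P. d \<sigma> * max 0 (x - \<sigma>))"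
    using SP by (intro sum.mono_neutral_cong_right) auto
  finally show "spline J' (S \<union> P) x = spline J S x + (\<Sum>\<sigma>\<in>P. d \<sigma> * max 0 (x - \<sigma>))" .
  have "spline_cost J' (S \<union> P) = (\<Sum>\<sigma>\<in>S \<union> P. \<bar>J \<sigma>\<bar> * kink_weight \<sigma>)
      + (\<Sum>\<sigma>\<in>S \<union> P. (\<bar>J' \<sigma>\<bar> - \<bar>J \<sigma>\<bar>) * kink_weight \<sigma>)"
    unfolding spline_cost_def by (simp add: algebra_simps flip: sum.distrib)
  also have "(\<Sum>\<sigma>\<in>S \<union> P. \<bar>J \<sigma>\<bar> * kink_weight \<sigma>) = spline_cost J S"
    unfolding spline_cost_def using SP supp by (intro sum.mono_neutral_right) auto
  also have "(\<Sum>\<sigma>\<in>S \<union> P. (\<bar>J' \<sigma>\<bar> - \<bar>J \<sigma>\<bar>) * kink_weight \<sigma>)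
      = (\<Sum>\<sigma>\<in>P. (\<bar>J \<sigma> + d \<sigma>\<bar> - \<bar>J \<sigma>\<bar>) * kink_weight \<sigma>)"
    using SP unfolding J'_def by (intro sum.mono_neutral_cong_right) auto
  finally show "spline_cost J' (S \<union> P)
      = spline_cost J S + (\<Sum>\<sigma>\<in>P. (\<bar>J \<sigma> + d \<sigma>\<bar> - \<bar>J \<sigma>\<bar>) * kink_weight \<sigma>)" .
qed

lemma ramp_chord_identity:
  fixes a \<tau> b x :: real
  assumes "a < \<tau>" "\<tau> < b" "x \<le> a \<or> b \<le> x"
  shows "(b - \<tau>) / (b - a) * max 0 (x - a) + (\<tau> - a) / (b - a) * max 0 (x - b) = max 0 (x - \<tau>)"
proof (cases "x \<le> a")
  case False
  then have "max 0 (x - a) = x - a" "max 0 (x - b) = x - b" "max 0 (x - \<tau>) = x - \<tau>"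
    using assms by auto
  moreover have "(b - \<tau>) / (b - a) * (x - a) + (\<tau> - a) / (b - a) * (x - b)
      = ((b - \<tau>) * (x - a) + (\<tau> - a) * (x - b)) / (b - a)"
    by (simp add: add_divide_distrib)
  moreover have "(b - \<tau>) * (x - a) + (\<tau> - a) * (x - b) = (b - a) * (x - \<tau>)"
    by (simp add: algebra_simps)
  ultimately show ?thesis
    using assms by simp
qed (use assms in auto)

section \<open>Networks as splines\<close>

lemma relu_pos_scale: "0 < w \<Longrightarrow> max 0 (w * y) = w * max 0 (y::real)"
  by (simp add: max_mult_distrib_left)

lemma neuron_eq_ramp:
  fixes a w b x :: real
  assumes "w \<noteq> 0"
  shows "a * max 0 (w * x + b)
    = a * \<bar>w\<bar> * max 0 (x - - b / w) + (if w < 0 then a * w * x + a * b else 0)"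
proof -
  have shift: "w * x + b = w * (x - - b / w)"
    using assms by (simp add: algebra_simps)
  show ?thesis
  proof (cases "0 < w")
    case True
    then show ?thesis
      unfolding shift by (simp add: relu_pos_scale)
  next
    case False
    then have neg: "w < 0" using assms by simp
    have "max 0 (w * y) = - w * max 0 y + w * y" for y :: real
      using neg by (simp add: max_def mult_le_0_iff zero_le_mult_iff)
    then have "a * max 0 (w * x + b) = a * (- w * max 0 (x - - b / w) + w * (x - - b / w))"
      unfolding shift by simp
    also have "\<dots> = a * \<bar>w\<bar> * max 0 (x - - b / w) + (a * w * x + a * b)"
      using neg by (simp add: field_simps)
    finally show ?thesis
      using neg by simp
  qed
qed

lemma neuron_ramp_cost_le:
  fixes a w b :: real
  assumes "w \<noteq> 0"
  shows "2 * (\<bar>a * \<bar>w\<bar>\<bar> * kink_weight (- b / w)) \<le> a\<^sup>2 + w\<^sup>2 + b\<^sup>2"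
proof -
  define s where "s = sqrt (w\<^sup>2 + b\<^sup>2)"
  have "\<bar>w\<bar> * kink_weight (- b / w) = sqrt (w\<^sup>2 * (1 + (- b / w)\<^sup>2))"
    unfolding kink_weight_def by (simp add: real_sqrt_mult)
  also have "w\<^sup>2 * (1 + (- b / w)\<^sup>2) = w\<^sup>2 + b\<^sup>2"
    using assms by (simp add: field_simps power2_eq_square)
  finally have "\<bar>a * \<bar>w\<bar>\<bar> * kink_weight (- b / w) = \<bar>a\<bar> * s"
    unfolding s_def by (simp add: abs_mult)
  moreover have "2 * \<bar>a\<bar> * s \<le> a\<^sup>2 + s\<^sup>2"
    using sum_squares_bound[of "\<bar>a\<bar>" s] by (simp add: power2_eq_square)
  ultimately show ?thesis
    unfolding s_def by simp
qed

lemma neuron_as_kink: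
  fixes a w b :: real
  obtains c \<tau> \<alpha> \<beta> where "\<And>x. a * max 0 (w * x + b) = c * max 0 (x - \<tau>) + \<alpha> * x + \<beta>"
    and "2 * (\<bar>c\<bar> * kink_weight \<tau>) \<le> a\<^sup>2 + w\<^sup>2 + b\<^sup>2"
proof (cases "w = 0")
  case True
  then show ?thesis
    using that[of 0 0 0 "a * max 0 b"] by simp
next
  case False
  show ?thesis
  proof (rule that)
    show "a * max 0 (w * x + b) = a * \<bar>w\<bar> * max 0 (x - - b / w)
        + (if w < 0 then a * w else 0) * x + (if w < 0 then a * b else 0)" for x
      using neuron_eq_ramp[OF False, of a x b] by simp
    show "2 * (\<bar>a * \<bar>w\<bar>\<bar> * kink_weight (- b / w)) \<le> a\<^sup>2 + w\<^sup>2 + b\<^sup>2"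
      using neuron_ramp_cost_le[OF False] .
  qed
qed

lemma hidden_layer_as_spline:
  "\<exists>J S \<alpha> \<beta>. finite S \<and> (\<forall>\<sigma>. \<sigma> \<notin> S \<longrightarrow> J \<sigma> = 0)
     \<and> (\<forall>x. (\<Sum>(a, w, b) \<leftarrow> \<theta>. a * max 0 (w * x + b)) = \<alpha> * x + \<beta> + spline J S x)
     \<and> 2 * spline_cost J S \<le> param_norm2 \<theta>"
proof (induction \<theta>)
  case Nil
  show ?case
    by (intro exI[of _ "\<lambda>_. 0"] exI[of _ "{}"] exI[of _ 0])
      (auto simp: spline_def spline_cost_def param_norm2_def)
next
  case (Cons neuron \<theta>)
  obtain a w b where neuron: "neuron = (a, w, b)"
    by (cases neuron) auto
  from Cons.IH obtain J S \<alpha> \<beta> where S: "finite S" and supp: "\<forall>\<sigma>. \<sigma> \<notin> S \<longrightarrow> J \<sigma> = 0"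
    and hidden: "\<And>x. (\<Sum>(a, w, b) \<leftarrow> \<theta>. a * max 0 (w * x + b)) = \<alpha> * x + \<beta> + spline J S x"
    and cost: "2 * spline_cost J S \<le> param_norm2 \<theta>"
    by blast
  obtain c \<tau> \<alpha>' \<beta>' where kink: "\<And>x. a * max 0 (w * x + b) = c * max 0 (x - \<tau>) + \<alpha>' * x + \<beta>'"
    and kink_cost: "2 * (\<bar>c\<bar> * kink_weight \<tau>) \<le> a\<^sup>2 + w\<^sup>2 + b\<^sup>2"
    using neuron_as_kink[of a w b] by blast
  define J' where "J' = (\<lambda>\<sigma>. J \<sigma> + (if \<sigma> \<in> {\<tau>} then c else 0))"
  have "spline_cost J' (S \<union> {\<tau>}) = spline_cost J S + (\<bar>J \<tau> + c\<bar> - \<bar>J \<tau>\<bar>) * kink_weight \<tau>"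
    using spline_add_kinks(2)[OF S _ supp, of "{\<tau>}" "\<lambda>_. c"] unfolding J'_def by simp
  also have "\<dots> \<le> spline_cost J S + \<bar>c\<bar> * kink_weight \<tau>"
    using kink_weight_pos[of \<tau>] by (simp add: mult_right_mono abs_triangle_ineq4)
  finally have cost': "2 * spline_cost J' (S \<union> {\<tau>}) \<le> param_norm2 (neuron # \<theta>)"
    using cost kink_cost unfolding param_norm2_def neuron by simp
  have hidden': "(\<Sum>(a, w, b) \<leftarrow> neuron # \<theta>. a * max 0 (w * x + b))
      = (\<alpha> + \<alpha>') * x + (\<beta> + \<beta>') + spline J' (S \<union> {\<tau>}) x" for x
    using hidden[of x] kink[of x] spline_add_kinks(1)[OF S _ supp, of "{\<tau>}" "\<lambda>_. c" x]
    unfolding neuron J'_def by (simp add: algebra_simps)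
  show ?case
  proof (rule exI[of _ J'], rule exI[of _ "S \<union> {\<tau>}"], rule exI[of _ "\<alpha> + \<alpha>'"],
      rule exI[of _ "\<beta> + \<beta>'"], intro conjI)
    show "finite (S \<union> {\<tau>})"
      using S by simp
    show "\<forall>\<sigma>. \<sigma> \<notin> S \<union> {\<tau>} \<longrightarrow> J' \<sigma> = 0"
      using supp unfolding J'_def by simp
  qed (use hidden' cost' in blast)+
qed

text \<open>For \<open>c = 0\<close> the scale \<open>s\<close> is \<open>0\<close>, and \<open>c / s = 0\<close> gives the zero neuron.\<close>
definition ramp_neuron :: "real \<Rightarrow> real \<Rightarrow> real \<times> real \<times> real" where
  "ramp_neuron c \<sigma> = (let s = sqrt (\<bar>c\<bar> / kink_weight \<sigma>) in (c / s, s, - s * \<sigma>))"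

lemma ramp_neuron_eval:
  "(case ramp_neuron c \<sigma> of (a, w, b) \<Rightarrow> a * max 0 (w * x + b)) = c * max 0 (x - \<sigma>)"
proof (cases "c = 0")
  case False
  define s where "s = sqrt (\<bar>c\<bar> / kink_weight \<sigma>)"
  have "0 < s"
    unfolding s_def using False kink_weight_pos[of \<sigma>] by simp
  moreover have "max 0 (s * x + - s * \<sigma>) = s * max 0 (x - \<sigma>)"
    using relu_pos_scale[OF \<open>0 < s\<close>, of "x - \<sigma>"] by (simp add: algebra_simps)
  ultimately have "c / s * max 0 (s * x + - s * \<sigma>) = c * max 0 (x - \<sigma>)"
    by simp
  then show ?thesis
    unfolding ramp_neuron_def s_def[symmetric] by simp
qed (simp add: ramp_neuron_def)

lemma ramp_neuron_norm:
  "(case ramp_neuron c \<sigma> of (a, w, b) \<Rightarrow> a\<^sup>2 + w\<^sup>2 + b\<^sup>2) = 2 * (\<bar>c\<bar> * kink_weight \<sigma>)"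
proof (cases "c = 0")
  case False
  define s where "s = sqrt (\<bar>c\<bar> / kink_weight \<sigma>)"
  have s2: "s\<^sup>2 = \<bar>c\<bar> / kink_weight \<sigma>"
    unfolding s_def using kink_weight_pos[of \<sigma>] by simp
  have "(c / s)\<^sup>2 + s\<^sup>2 + (- s * \<sigma>)\<^sup>2 = c\<^sup>2 / s\<^sup>2 + s\<^sup>2 * (kink_weight \<sigma>)\<^sup>2"
    by (simp add: power_divide power_mult_distrib kink_weight_squared algebra_simps)
  also have "\<dots> = 2 * (\<bar>c\<bar> * kink_weight \<sigma>)"
    unfolding s2 using False kink_weight_pos[of \<sigma>] by (simp add: field_simps power2_eq_square)
  finally show ?thesis
    unfolding ramp_neuron_def s_def[symmetric] by simp
qed (simp add: ramp_neuron_def)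

definition spline_network :: "(real \<Rightarrow> real) \<Rightarrow> real set \<Rightarrow> (real \<times> real \<times> real) list" where
  "spline_network J S = map (\<lambda>\<sigma>. ramp_neuron (J \<sigma>) \<sigma>) (sorted_list_of_set S)"

lemma relu_net_spline_network:
  "finite S \<Longrightarrow> relu_net (spline_network J S) a0 b0 x = spline J S x + a0 * x + b0"
  by (simp add: relu_net_def spline_network_def spline_def ramp_neuron_eval o_def
      sum_list_distinct_conv_sum_set)

lemma param_norm2_spline_network:
  "finite S \<Longrightarrow> param_norm2 (spline_network J S) = 2 * spline_cost J S"
  by (simp add: param_norm2_def spline_network_def spline_cost_def ramp_neuron_norm o_def
      sum_list_distinct_conv_sum_set sum_distrib_left)

definition affine_on :: "real set \<Rightarrow> (real \<Rightarrow> real) \<Rightarrow> bool" where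
  "affine_on X g \<longleftrightarrow> (\<exists>\<alpha> \<beta>. \<forall>x\<in>X. g x = \<alpha> * x + \<beta>)"

definition optimal_spline :: "real set \<Rightarrow> (real \<Rightarrow> real) \<Rightarrow> real set \<Rightarrow> bool" where
  "optimal_spline X J S \<longleftrightarrow> finite S \<and> (\<forall>\<sigma>. \<sigma> \<notin> S \<longrightarrow> J \<sigma> = 0) \<and>
     (\<forall>J' S'. finite S' \<longrightarrow> affine_on X (\<lambda>x. spline J' S' x - spline J S x)
        \<longrightarrow> spline_cost J S \<le> spline_cost J' S')"

lemma min_norm_interpolant_optimal_spline:
  assumes "min_norm_interpolant n xs ys fhat"
  obtains J S \<alpha> \<beta> where "optimal_spline (xs ` {1..n}) J S"
    and "fhat = (\<lambda>x. \<alpha> * x + \<beta> + spline J S x)" and "\<forall>k\<in>{1..n}. ys k = fhat (xs k)"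
proof -
  obtain \<theta> a0 b0 where interp: "interpolates n xs ys \<theta> a0 b0" and fhat: "fhat = relu_net \<theta> a0 b0"
    and min: "\<forall>\<theta>' a0' b0'. interpolates n xs ys \<theta>' a0' b0' \<longrightarrow> param_norm2 \<theta> \<le> param_norm2 \<theta>'"
    using assms unfolding min_norm_interpolant_def by blast
  obtain J S \<alpha> \<beta> where S: "finite S" and supp: "\<forall>\<sigma>. \<sigma> \<notin> S \<longrightarrow> J \<sigma> = 0"
    and hidden: "\<forall>x. (\<Sum>(a, w, b) \<leftarrow> \<theta>. a * max 0 (w * x + b)) = \<alpha> * x + \<beta> + spline J S x"
    and cost: "2 * spline_cost J S \<le> param_norm2 \<theta>"
    using hidden_layer_as_spline[of \<theta>] by blast
  have fhat_spline: "fhat = (\<lambda>x. (\<alpha> + a0) * x + (\<beta> + b0) + spline J S x)"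
    unfolding fhat relu_net_def using hidden by (simp add: algebra_simps)
  have data: "\<forall>k\<in>{1..n}. ys k = fhat (xs k)"
    using interp unfolding interpolates_def fhat by simp
  have "spline_cost J S \<le> spline_cost J' S'"
    if S': "finite S'" and aff: "affine_on (xs ` {1..n}) (\<lambda>x. spline J' S' x - spline J S x)" for J' S'
  proof -
    obtain \<alpha>' \<beta>' where diff: "\<forall>k\<in>{1..n}. spline J' S' (xs k) - spline J S (xs k) = \<alpha>' * xs k + \<beta>'"
      using aff unfolding affine_on_def by auto
    have "interpolates n xs ys (spline_network J' S') (\<alpha> + a0 - \<alpha>') (\<beta> + b0 - \<beta>')"
      unfolding interpolates_def relu_net_spline_network[OF S']
      using data diff unfolding fhat_spline by (simp add: algebra_simps)
    then have "param_norm2 \<theta> \<le> 2 * spline_cost J' S'"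
      using min param_norm2_spline_network[OF S'] by metis
    then show ?thesis
      using cost by simp
  qed
  then have "optimal_spline (xs ` {1..n}) J S"
    unfolding optimal_spline_def using S supp by blast
  then show ?thesis
    using that fhat_spline data by blast
qed

section \<open>Local structure of optimal splines\<close>

lemma sum_map_of_eq_sum_list:
  "distinct (map fst ds) \<Longrightarrow> (\<Sum>\<sigma>\<in>fst ` set ds. g \<sigma> (the (map_of ds \<sigma>))) = (\<Sum>(\<sigma>, c) \<leftarrow> ds. g \<sigma> c)"
proof (induction ds)
  case (Cons sc ds)
  obtain s c where sc: "sc = (s, c)"
    by fastforce
  have "(\<Sum>\<sigma>\<in>fst ` set ds. g \<sigma> (the (map_of (sc # ds) \<sigma>))) = (\<Sum>\<sigma>\<in>fst ` set ds. g \<sigma> (the (map_of ds \<sigma>)))"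
    using Cons.prems unfolding sc by (intro sum.cong) auto
  then show ?case
    using Cons unfolding sc by simp
qed simp

lemma optimal_spline_perturb:
  assumes opt: "optimal_spline X J S" and keys: "distinct (map fst ds)"
    and aff: "affine_on X (\<lambda>x. \<Sum>(\<sigma>, c) \<leftarrow> ds. c * max 0 (x - \<sigma>))"
  shows "0 \<le> (\<Sum>(\<sigma>, c) \<leftarrow> ds. (\<bar>J \<sigma> + c\<bar> - \<bar>J \<sigma>\<bar>) * kink_weight \<sigma>)"
proof -
  define P d where "P = fst ` set ds" and "d = (\<lambda>\<sigma>. the (map_of ds \<sigma>))"
  define J' where "J' = (\<lambda>\<sigma>. J \<sigma> + (if \<sigma> \<in> P then d \<sigma> else 0))"
  have S: "finite S" and supp: "\<forall>\<sigma>. \<sigma> \<notin> S \<longrightarrow> J \<sigma> = 0"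
    using opt unfolding optimal_spline_def by auto
  have P: "finite P"
    unfolding P_def by simp
  have "spline J' (S \<union> P) x - spline J S x = (\<Sum>(\<sigma>, c) \<leftarrow> ds. c * max 0 (x - \<sigma>))" for x
    using spline_add_kinks(1)[OF S P supp, of d]
      sum_map_of_eq_sum_list[OF keys, of "\<lambda>\<sigma> c. c * max 0 (x - \<sigma>)"]
    unfolding J'_def P_def d_def by simp
  then have "spline_cost J S \<le> spline_cost J' (S \<union> P)"
    using opt S P aff unfolding optimal_spline_def by simp
  then show ?thesis
    using spline_add_kinks(2)[OF S P supp, of d]
      sum_map_of_eq_sum_list[OF keys, of "\<lambda>\<sigma> c. (\<bar>J \<sigma> + c\<bar> - \<bar>J \<sigma>\<bar>) * kink_weight \<sigma>"]
    unfolding J'_def P_def d_def by simp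
qed

lemma optimal_spline_uminus:
  assumes "optimal_spline X J S"
  shows "optimal_spline X (\<lambda>\<sigma>. - J \<sigma>) S"
proof -
  have "spline_cost J S \<le> spline_cost J' S'"
    if "finite S'" and "affine_on X (\<lambda>x. spline J' S' x - spline (\<lambda>\<sigma>. - J \<sigma>) S x)" for J' S'
  proof -
    from that(2) obtain \<alpha> \<beta> where "\<forall>x\<in>X. spline J' S' x + spline J S x = \<alpha> * x + \<beta>"
      unfolding affine_on_def spline_uminus by auto
    then have "affine_on X (\<lambda>x. spline (\<lambda>\<sigma>. - J' \<sigma>) S' x - spline J S x)"
      unfolding affine_on_def spline_uminus
      by (intro exI[of _ "- \<alpha>"] exI[of _ "- \<beta>"]) (auto simp: algebra_simps)
    then have "spline_cost J S \<le> spline_cost (\<lambda>\<sigma>. - J' \<sigma>) S'"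
      using assms that(1) unfolding optimal_spline_def by blast
    then show ?thesis
      by (simp add: spline_cost_def)
  qed
  then show ?thesis
    using assms unfolding optimal_spline_def by (simp add: spline_cost_def)
qed

lemma affine_on_scale: "affine_on X g \<Longrightarrow> affine_on X (\<lambda>x. c * g x)"
  unfolding affine_on_def by (metis distrib_left mult.assoc)

lemma optimal_spline_kink_outside_hull:
  assumes opt: "optimal_spline X J S" and side: "(\<forall>x\<in>X. \<tau> \<le> x) \<or> (\<forall>x\<in>X. x \<le> \<tau>)"
  shows "J \<tau> = 0"
proof -
  have "affine_on X (\<lambda>x. max 0 (x - \<tau>))"
    using side unfolding affine_on_def
  proof
    assume "\<forall>x\<in>X. \<tau> \<le> x"
    then show "\<exists>\<alpha> \<beta>. \<forall>x\<in>X. max 0 (x - \<tau>) = \<alpha> * x + \<beta>"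
      by (intro exI[of _ 1] exI[of _ "- \<tau>"]) auto
  next
    assume "\<forall>x\<in>X. x \<le> \<tau>"
    then show "\<exists>\<alpha> \<beta>. \<forall>x\<in>X. max 0 (x - \<tau>) = \<alpha> * x + \<beta>"
      by (intro exI[of _ 0]) auto
  qed
  then have "affine_on X (\<lambda>x. \<Sum>(\<sigma>, c) \<leftarrow> [(\<tau>, - J \<tau>)]. c * max 0 (x - \<sigma>))"
    using affine_on_scale[of X _ "- J \<tau>"] by simp
  then have "0 \<le> - \<bar>J \<tau>\<bar> * kink_weight \<tau>"
    using optimal_spline_perturb[OF opt, of "[(\<tau>, - J \<tau>)]"] by simp
  then show ?thesis
    using kink_weight_pos[of \<tau>] by (simp add: mult_le_0_iff)
qed

lemma optimal_spline_move_kink: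
  assumes opt: "optimal_spline X J S" and "\<tau> \<noteq> w" "0 \<le> l"
    and cheaper: "l * kink_weight w < kink_weight \<tau>"
    and aff: "affine_on X (\<lambda>x. l * max 0 (x - w) - max 0 (x - \<tau>))"
  shows "J \<tau> = 0"
proof (rule ccontr)
  assume "J \<tau> \<noteq> 0"
  have "\<bar>J w + l * J \<tau>\<bar> - \<bar>J w\<bar> \<le> \<bar>J \<tau>\<bar> * l"
    using abs_triangle_ineq[of "J w" "l * J \<tau>"] \<open>0 \<le> l\<close> by (simp add: abs_mult mult.commute)
  then have moved: "(\<bar>J w + l * J \<tau>\<bar> - \<bar>J w\<bar>) * kink_weight w \<le> \<bar>J \<tau>\<bar> * (l * kink_weight w)"
    using kink_weight_pos[of w] by (simp add: mult_right_mono)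
  have "affine_on X (\<lambda>x. \<Sum>(\<sigma>, c) \<leftarrow> [(\<tau>, - J \<tau>), (w, l * J \<tau>)]. c * max 0 (x - \<sigma>))"
    using affine_on_scale[OF aff, of "J \<tau>"] by (simp add: algebra_simps)
  then have "0 \<le> - \<bar>J \<tau>\<bar> * kink_weight \<tau> + (\<bar>J w + l * J \<tau>\<bar> - \<bar>J w\<bar>) * kink_weight w"
    using optimal_spline_perturb[OF opt, of "[(\<tau>, - J \<tau>), (w, l * J \<tau>)]"] \<open>\<tau> \<noteq> w\<close> by simp
  also note moved
  also have "\<bar>J \<tau>\<bar> * (l * kink_weight w) < \<bar>J \<tau>\<bar> * kink_weight \<tau>"
    using cheaper \<open>J \<tau> \<noteq> 0\<close> by simp
  finally show False
    by simp
qed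

lemma optimal_spline_kink_first_gap:
  assumes opt: "optimal_spline X J S" and uv: "0 \<le> u" "u < \<tau>" "\<tau> < v"
    and data: "X \<subseteq> insert u {v..}"
  shows "J \<tau> = 0"
proof (rule optimal_spline_move_kink[OF opt])
  show "\<tau> \<noteq> v" "0 \<le> (\<tau> - u) / (v - u)"
    using uv by auto
  show "(\<tau> - u) / (v - u) * kink_weight v < kink_weight \<tau>"
    using kink_weight_rescaled_lt[OF uv] .
  define c where "c = (v - \<tau>) / (v - u)"
  have "(\<tau> - u) / (v - u) * max 0 (x - v) - max 0 (x - \<tau>) = - c * x + c * u" if "x \<in> X" for x
  proof -
    have "x \<le> u \<or> v \<le> x" "max 0 (x - u) = x - u"
      using that data uv by auto
    then show ?thesis
      using ramp_chord_identity[of u \<tau> v x] uv unfolding c_def[symmetric] by (simp add: algebra_simps)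
  qed
  then show "affine_on X (\<lambda>x. (\<tau> - u) / (v - u) * max 0 (x - v) - max 0 (x - \<tau>))"
    unfolding affine_on_def by blast
qed

lemma optimal_spline_kink_last_gap:
  assumes opt: "optimal_spline X J S" and uv: "0 \<le> u" "u < \<tau>" "\<tau> < v"
    and data: "X \<subseteq> insert v {..u}"
  shows "J \<tau> = 0"
proof (rule optimal_spline_move_kink[OF opt])
  show "\<tau> \<noteq> u" "0 \<le> (v - \<tau>) / (v - u)"
    using uv by auto
  have "(v - \<tau>) / (v - u) < 1"
    using uv by simp
  then have "(v - \<tau>) / (v - u) * kink_weight u < kink_weight u"
    using mult_strict_right_mono[OF _ kink_weight_pos[of u]] by fastforce
  also have "kink_weight u \<le> kink_weight \<tau>"
    using uv by (simp add: kink_weight_mono)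
  finally show "(v - \<tau>) / (v - u) * kink_weight u < kink_weight \<tau>" .
  have "(v - \<tau>) / (v - u) * max 0 (x - u) - max 0 (x - \<tau>) = 0 * x + 0" if "x \<in> X" for x
  proof -
    have "x \<le> u \<or> v \<le> x" "max 0 (x - v) = 0"
      using that data uv by auto
    then show ?thesis
      using ramp_chord_identity[of u \<tau> v x] uv by simp
  qed
  then show "affine_on X (\<lambda>x. (v - \<tau>) / (v - u) * max 0 (x - u) - max 0 (x - \<tau>))"
    unfolding affine_on_def by blast
qed

lemma optimal_spline_chord_move:
  assumes opt: "optimal_spline X J S" and ab: "a < \<tau>" "\<tau> < b" and gap: "X \<inter> {a<..<b} = {}"
  defines "l \<equiv> (b - \<tau>) / (b - a)" and "l' \<equiv> (\<tau> - a) / (b - a)"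
  shows "0 \<le> (\<bar>J a + e * l\<bar> - \<bar>J a\<bar>) * kink_weight a + (\<bar>J \<tau> - e\<bar> - \<bar>J \<tau>\<bar>) * kink_weight \<tau>
    + (\<bar>J b + e * l'\<bar> - \<bar>J b\<bar>) * kink_weight b"
proof -
  have "(\<Sum>(\<sigma>, c) \<leftarrow> [(a, e * l), (\<tau>, - e), (b, e * l')]. c * max 0 (x - \<sigma>)) = 0 * x + 0"
    if "x \<in> X" for x
  proof -
    have "x \<le> a \<or> b \<le> x"
      using gap that by auto
    then have "l * max 0 (x - a) + l' * max 0 (x - b) = max 0 (x - \<tau>)"
      unfolding l_def l'_def using ramp_chord_identity ab by blast
    then show ?thesis
      by (simp add: algebra_simps flip: distrib_left)
  qed
  then have "affine_on X (\<lambda>x. \<Sum>(\<sigma>, c) \<leftarrow> [(a, e * l), (\<tau>, - e), (b, e * l')]. c * max 0 (x - \<sigma>))"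
    unfolding affine_on_def by blast
  then show ?thesis
    using optimal_spline_perturb[OF opt, of "[(a, e * l), (\<tau>, - e), (b, e * l')]"] ab by simp
qed

lemma optimal_spline_gap_sign_left:
  assumes opt: "optimal_spline X J S" and ab: "a < \<tau>" "\<tau> < b" "b - a < 1"
    and gap: "X \<inter> {a<..<b} = {}" and pos: "0 < J \<tau>"
  shows "0 \<le> J a"
proof (rule ccontr)
  assume "\<not> 0 \<le> J a"
  define l l' where "l = (b - \<tau>) / (b - a)" and "l' = (\<tau> - a) / (b - a)"
  have l: "0 < l" "0 < l'"
    using ab unfolding l_def l'_def by simp_all
  define e where "e = min (J \<tau>) (- J a / l)"
  have e: "0 < e" "e \<le> J \<tau>" "e * l \<le> - J a"
    using pos \<open>\<not> 0 \<le> J a\<close> l unfolding e_def by (simp_all add: divide_neg_pos min_def field_simps)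
  have "0 \<le> (\<bar>J a + e * l\<bar> - \<bar>J a\<bar>) * kink_weight a + (\<bar>J \<tau> - e\<bar> - \<bar>J \<tau>\<bar>) * kink_weight \<tau>
    + (\<bar>J b + e * l'\<bar> - \<bar>J b\<bar>) * kink_weight b"
    using optimal_spline_chord_move[OF opt ab(1,2) gap, of e] unfolding l_def l'_def .
  also have "\<dots> \<le> - (e * l) * kink_weight a - e * kink_weight \<tau> + e * l' * kink_weight b"
  proof -
    have "\<bar>J a + e * l\<bar> - \<bar>J a\<bar> = - (e * l)" "\<bar>J \<tau> - e\<bar> - \<bar>J \<tau>\<bar> = - e"
      using e l \<open>\<not> 0 \<le> J a\<close> by auto
    moreover have "(\<bar>J b + e * l'\<bar> - \<bar>J b\<bar>) * kink_weight b \<le> e * l' * kink_weight b"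
      using mult_pos_pos[OF e(1) l(2)] kink_weight_pos[of b] by (intro mult_right_mono) linarith+
    ultimately show ?thesis
      by simp
  qed
  also have "\<dots> = e * (l' * kink_weight b - kink_weight \<tau>) - e * l * kink_weight a"
    by (simp add: algebra_simps)
  also have "\<dots> < 0"
  proof -
    have "l' * kink_weight b < kink_weight \<tau>"
      using kink_weight_chord_lt(2)[OF ab] unfolding l'_def .
    then show ?thesis
      using e(1) mult_pos_pos[OF l(1) kink_weight_pos[of a]] by (simp add: mult_pos_neg add_neg_neg)
  qed
  finally show False
    by simp
qed

lemma optimal_spline_gap_sign_right:
  assumes opt: "optimal_spline X J S" and ab: "a < \<tau>" "\<tau> < b" "b - a < 1"
    and gap: "X \<inter> {a<..<b} = {}" and pos: "0 < J \<tau>"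
  shows "0 \<le> J b"
proof (rule ccontr)
  assume "\<not> 0 \<le> J b"
  define l l' where "l = (b - \<tau>) / (b - a)" and "l' = (\<tau> - a) / (b - a)"
  have l: "0 < l" "0 < l'"
    using ab unfolding l_def l'_def by simp_all
  define e where "e = min (J \<tau>) (- J b / l')"
  have e: "0 < e" "e \<le> J \<tau>" "e * l' \<le> - J b"
    using pos \<open>\<not> 0 \<le> J b\<close> l unfolding e_def by (simp_all add: divide_neg_pos min_def field_simps)
  have "0 \<le> (\<bar>J a + e * l\<bar> - \<bar>J a\<bar>) * kink_weight a + (\<bar>J \<tau> - e\<bar> - \<bar>J \<tau>\<bar>) * kink_weight \<tau>
    + (\<bar>J b + e * l'\<bar> - \<bar>J b\<bar>) * kink_weight b"
    using optimal_spline_chord_move[OF opt ab(1,2) gap, of e] unfolding l_def l'_def .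
  also have "\<dots> \<le> e * l * kink_weight a - e * kink_weight \<tau> - e * l' * kink_weight b"
  proof -
    have "\<bar>J b + e * l'\<bar> - \<bar>J b\<bar> = - (e * l')" "\<bar>J \<tau> - e\<bar> - \<bar>J \<tau>\<bar> = - e"
      using e l \<open>\<not> 0 \<le> J b\<close> by auto
    moreover have "(\<bar>J a + e * l\<bar> - \<bar>J a\<bar>) * kink_weight a \<le> e * l * kink_weight a"
      using mult_pos_pos[OF e(1) l(1)] kink_weight_pos[of a] by (intro mult_right_mono) linarith+
    ultimately show ?thesis
      by simp
  qed
  also have "\<dots> = e * (l * kink_weight a - kink_weight \<tau>) - e * l' * kink_weight b"
    by (simp add: algebra_simps)
  also have "\<dots> < 0"
  proof -
    have "l * kink_weight a < kink_weight \<tau>"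
      using kink_weight_chord_lt(1)[OF ab] unfolding l_def .
    then show ?thesis
      using e(1) mult_pos_pos[OF l(2) kink_weight_pos[of b]] by (simp add: mult_pos_neg add_neg_neg)
  qed
  finally show False
    by simp
qed

lemma optimal_spline_double_chord_move:
  assumes opt: "optimal_spline X J S" and pts: "p < \<tau>" "\<tau> < q" "q < \<tau>'" "\<tau>' < r"
    and gaps: "X \<inter> {p<..<q} = {}" "X \<inter> {q<..<r} = {}"
  defines "l \<equiv> (q - \<tau>) / (q - p)" and "l' \<equiv> (\<tau> - p) / (q - p)"
    and "m \<equiv> (r - \<tau>') / (r - q)" and "m' \<equiv> (\<tau>' - q) / (r - q)"
  shows "0 \<le> (\<bar>J p + e * m * l\<bar> - \<bar>J p\<bar>) * kink_weight p + (\<bar>J \<tau> - e * m\<bar> - \<bar>J \<tau>\<bar>) * kink_weight \<tau>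
    + (\<bar>J \<tau>' + e * l'\<bar> - \<bar>J \<tau>'\<bar>) * kink_weight \<tau>' + (\<bar>J r - e * l' * m'\<bar> - \<bar>J r\<bar>) * kink_weight r"
proof -
  define ds where "ds = [(p, e * m * l), (\<tau>, - (e * m)), (\<tau>', e * l'), (r, - (e * l' * m'))]"
  have "(\<Sum>(\<sigma>, c) \<leftarrow> ds. c * max 0 (x - \<sigma>)) = 0 * x + 0" if "x \<in> X" for x
  proof -
    have chord: "l * max 0 (x - p) + l' * max 0 (x - q) = max 0 (x - \<tau>)"
      "m * max 0 (x - q) + m' * max 0 (x - r) = max 0 (x - \<tau>')"
      using gaps that pts ramp_chord_identity[of p \<tau> q x] ramp_chord_identity[of q \<tau>' r x]
      unfolding l_def l'_def m_def m'_def by fastforce+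
    \<comment> \<open>The kinks at \<open>q\<close> of the two chord identities cancel.\<close>
    have "(\<Sum>(\<sigma>, c) \<leftarrow> ds. c * max 0 (x - \<sigma>))
        = e * (m * (l * max 0 (x - p) + l' * max 0 (x - q) - max 0 (x - \<tau>))
            - l' * (m * max 0 (x - q) + m' * max 0 (x - r) - max 0 (x - \<tau>')))"
      unfolding ds_def by (simp add: algebra_simps)
    then show ?thesis
      unfolding chord by simp
  qed
  then have "affine_on X (\<lambda>x. \<Sum>(\<sigma>, c) \<leftarrow> ds. c * max 0 (x - \<sigma>))"
    unfolding affine_on_def by blast
  then show ?thesis
    using optimal_spline_perturb[OF opt, of ds] pts unfolding ds_def by simp
qed

lemma optimal_spline_adjacent_gaps_sign:
  assumes opt: "optimal_spline X J S" and pts: "p < \<tau>" "\<tau> < q" "q < \<tau>'" "\<tau>' < r"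
    and short: "q - p < 1" "r - q < 1"
    and gaps: "X \<inter> {p<..<q} = {}" "X \<inter> {q<..<r} = {}" and pos: "0 < J \<tau>"
  shows "0 \<le> J \<tau>'"
proof (rule ccontr)
  assume "\<not> 0 \<le> J \<tau>'"
  define l l' where "l = (q - \<tau>) / (q - p)" and "l' = (\<tau> - p) / (q - p)"
  define m m' where "m = (r - \<tau>') / (r - q)" and "m' = (\<tau>' - q) / (r - q)"
  have lm: "0 < l" "0 < l'" "0 < m" "0 < m'"
    using pts unfolding l_def l'_def m_def m'_def by simp_all
  define e where "e = min (J \<tau> / m) (- J \<tau>' / l')"
  have e: "0 < e" "e * m \<le> J \<tau>" "e * l' \<le> - J \<tau>'"
    using pos \<open>\<not> 0 \<le> J \<tau>'\<close> lm unfolding e_def by (simp_all add: divide_neg_pos min_def field_simps)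
  have "0 \<le> (\<bar>J p + e * m * l\<bar> - \<bar>J p\<bar>) * kink_weight p + (\<bar>J \<tau> - e * m\<bar> - \<bar>J \<tau>\<bar>) * kink_weight \<tau>
    + (\<bar>J \<tau>' + e * l'\<bar> - \<bar>J \<tau>'\<bar>) * kink_weight \<tau>' + (\<bar>J r - e * l' * m'\<bar> - \<bar>J r\<bar>) * kink_weight r"
    using optimal_spline_double_chord_move[OF opt pts gaps, of e] unfolding l_def l'_def m_def m'_def .
  also have "\<dots> \<le> e * m * l * kink_weight p - e * m * kink_weight \<tau> - e * l' * kink_weight \<tau>'
    + e * l' * m' * kink_weight r"
  proof -
    have "\<bar>J \<tau> - e * m\<bar> - \<bar>J \<tau>\<bar> = - (e * m)" "\<bar>J \<tau>' + e * l'\<bar> - \<bar>J \<tau>'\<bar> = - (e * l')"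
      using e mult_pos_pos[OF e(1) lm(3)] mult_pos_pos[OF e(1) lm(2)] \<open>\<not> 0 \<le> J \<tau>'\<close> by auto
    moreover have "(\<bar>J p + e * m * l\<bar> - \<bar>J p\<bar>) * kink_weight p \<le> e * m * l * kink_weight p"
      using mult_pos_pos[OF mult_pos_pos[OF e(1) lm(3)] lm(1)] kink_weight_pos[of p]
      by (intro mult_right_mono) linarith+
    moreover have "(\<bar>J r - e * l' * m'\<bar> - \<bar>J r\<bar>) * kink_weight r \<le> e * l' * m' * kink_weight r"
      using mult_pos_pos[OF mult_pos_pos[OF e(1) lm(2)] lm(4)] kink_weight_pos[of r]
      by (intro mult_right_mono) linarith+
    ultimately show ?thesis
      by simp
  qed
  also have "\<dots> = e * m * (l * kink_weight p - kink_weight \<tau>) + e * l' * (m' * kink_weight r - kink_weight \<tau>')"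
    by (simp add: algebra_simps)
  also have "\<dots> < 0"
  proof -
    have "l * kink_weight p < kink_weight \<tau>" "m' * kink_weight r < kink_weight \<tau>'"
      using kink_weight_chord_lt(1)[of p \<tau> q] kink_weight_chord_lt(2)[of q \<tau>' r] pts short
      unfolding l_def m'_def by simp_all
    then show ?thesis
      using mult_pos_pos[OF e(1) lm(3)] mult_pos_pos[OF e(1) lm(2)] by (simp add: mult_pos_neg add_neg_neg)
  qed
  finally show False
    by simp
qed

lemma optimal_spline_window_sign:
  assumes opt: "optimal_spline X J S" and apb: "a < p" "p < b" "p - a < 1" "b - p < 1"
    and gaps: "X \<inter> {a<..<p} = {}" "X \<inter> {p<..<b} = {}"
    and \<sigma>: "\<sigma> \<in> {a<..<b}" and \<tau>: "\<tau> \<in> {a<..<b}" and pos: "0 < J \<sigma>"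
  shows "0 \<le> J \<tau>"
proof -
  have ordered: "0 \<le> K y"
    if K: "optimal_spline X K S" and xy: "x < y" "x \<in> {a<..<b}" "y \<in> {a<..<b}" and "0 < K x" for K x y
  proof (rule ccontr)
    assume "\<not> 0 \<le> K y"
    consider "y \<le> p" | "p \<le> x" | "x < p" "p < y"
      by linarith
    then show False
    proof cases
      case 1
      have "X \<inter> {a<..<y} = {}"
        using gaps(1) 1 by auto
      then show False
        using optimal_spline_gap_sign_right[OF K, of a x y] xy 1 apb \<open>0 < K x\<close> \<open>\<not> 0 \<le> K y\<close> by auto
    next
      case 2
      have "X \<inter> {x<..<b} = {}"
        using gaps(2) 2 by auto
      then show False
        using optimal_spline_gap_sign_left[OF optimal_spline_uminus[OF K], of x y b]
          xy 2 apb \<open>0 < K x\<close> \<open>\<not> 0 \<le> K y\<close> by auto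
    next
      case 3
      then show False
        using optimal_spline_adjacent_gaps_sign[OF K, of a x p y b] xy apb gaps
          \<open>0 < K x\<close> \<open>\<not> 0 \<le> K y\<close> by auto
    qed
  qed
  show ?thesis
  proof (rule ccontr)
    assume "\<not> 0 \<le> J \<tau>"
    then consider "\<sigma> < \<tau>" | "\<tau> < \<sigma>"
      using pos by fastforce
    then show False
    proof cases
      case 1
      then show False
        using ordered[OF opt 1 \<sigma> \<tau> pos] \<open>\<not> 0 \<le> J \<tau>\<close> by simp
    next
      case 2
      then show False
        using ordered[OF optimal_spline_uminus[OF opt] 2 \<tau> \<sigma>] \<open>\<not> 0 \<le> J \<tau>\<close> pos by simp
    qed
  qed
qed

section \<open>Convexity and secants\<close>

lemma convex_on_sum_fun:
  assumes "finite S" "convex A" "\<And>i. i \<in> S \<Longrightarrow> convex_on A (f i)"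
  shows "convex_on A (\<lambda>x. \<Sum>i\<in>S. f i x)"
  using assms by (induction S rule: finite_induct) (auto simp: convex_on_const intro: convex_on_add)

lemma convex_on_cong_on:
  assumes f: "convex_on S f" and eq: "\<And>x. x \<in> S \<Longrightarrow> f x = g x"
  shows "convex_on S g"
proof (rule convex_onI)
  show S: "convex S"
    using f by (rule convex_on_imp_convex)
  fix t :: real and x y
  assume t: "0 < t" "t < 1" and xy: "x \<in> S" "y \<in> S"
  then have "(1 - t) *\<^sub>R x + t *\<^sub>R y \<in> S"
    using S by (intro convexD) auto
  then show "g ((1 - t) *\<^sub>R x + t *\<^sub>R y) \<le> (1 - t) * g x + t * g y"
    using convex_onD[OF f, of t x y] t xy eq by simp
qed

lemma convex_on_affine_fun: "convex A \<Longrightarrow> convex_on A (\<lambda>x::real. \<alpha> * x + \<beta>)"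
  by (rule convex_onI) (simp_all add: algebra_simps)

lemma convex_on_ramp: "convex A \<Longrightarrow> convex_on A (\<lambda>x::real. max 0 (x - \<sigma>))"
proof (rule convex_onI)
  fix t x y :: real
  assume t: "0 < t" "t < 1"
  have "(1 - t) * (x - \<sigma>) \<le> (1 - t) * max 0 (x - \<sigma>)" "t * (y - \<sigma>) \<le> t * max 0 (y - \<sigma>)"
    using t by (simp_all add: mult_left_mono)
  moreover have "0 \<le> (1 - t) * max 0 (x - \<sigma>) + t * max 0 (y - \<sigma>)"
    using t by simp
  moreover have "(1 - t) * x + t * y - \<sigma> = (1 - t) * (x - \<sigma>) + t * (y - \<sigma>)"
    by (simp add: algebra_simps)
  ultimately show "max 0 ((1 - t) *\<^sub>R x + t *\<^sub>R y - \<sigma>) \<le> (1 - t) * max 0 (x - \<sigma>) + t * max 0 (y - \<sigma>)"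
    by simp
qed

lemma convex_on_scaled_ramp:
  fixes a b c \<sigma> :: real
  assumes "0 \<le> c \<or> \<sigma> \<notin> {a<..<b}"
  shows "convex_on {a..b} (\<lambda>x. c * max 0 (x - \<sigma>))"
proof (cases "0 \<le> c")
  case True
  then show ?thesis
    by (simp add: convex_on_cmul convex_on_ramp)
next
  case False
  then have "\<sigma> \<le> a \<or> b \<le> \<sigma>"
    using assms by auto
  then show ?thesis
  proof
    assume "\<sigma> \<le> a"
    then show ?thesis
      by (intro convex_on_cong_on[OF convex_on_affine_fun[of _ c "- c * \<sigma>"]]) (auto simp: algebra_simps)
  next
    assume "b \<le> \<sigma>"
    then show ?thesis
      by (intro convex_on_cong_on[OF convex_on_affine_fun[of _ 0 0]]) auto
  qed
qed

lemma convex_on_affine_spline: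
  assumes "finite S" and nonneg: "\<forall>\<sigma>\<in>{a<..<b}. 0 \<le> J \<sigma>"
  shows "convex_on {a..b} (\<lambda>x. \<alpha> * x + \<beta> + spline J S x)"
proof -
  have "convex_on {a..b} (\<lambda>x. \<alpha> * x + \<beta>)"
    by (simp add: convex_on_affine_fun)
  moreover have "convex_on {a..b} (spline J S)"
    unfolding spline_def using assms
    by (intro convex_on_sum_fun convex_on_scaled_ramp) auto
  ultimately show ?thesis
    by (rule convex_on_add)
qed

definition secant :: "(real \<Rightarrow> real) \<Rightarrow> real \<Rightarrow> real \<Rightarrow> real \<Rightarrow> real" where
  "secant f p q t = f p + (f q - f p) / (q - p) * (t - p)"

lemma secant_uminus: "secant (\<lambda>x. - f x) p q t = - secant f p q t"
  unfolding secant_def by (simp add: algebra_simps diff_divide_distrib)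

lemma secant_of_affine:
  assumes "p \<noteq> q" and "\<And>x. x \<in> {p, q, t} \<Longrightarrow> f x = a * x + b"
  shows "secant f p q t = f t"
proof -
  have "secant f p q t = a * p + b + (a * q - a * p) / (q - p) * (t - p)"
    unfolding secant_def using assms(2) by simp
  also have "(a * q - a * p) / (q - p) = a"
    using assms(1) by (simp add: right_diff_distrib[symmetric])
  finally show ?thesis
    using assms(2) by (simp add: algebra_simps)
qed

lemma convex_on_le_secant:
  assumes "convex_on {p..q} f" "p \<le> t" "t \<le> q"
  shows "f t \<le> secant f p q t"
  using convex_onD_Icc'[OF assms(1), of t] assms(2,3) unfolding secant_def by simp

lemma convex_on_slope_mono:
  fixes f :: "real \<Rightarrow> real"
  assumes "convex_on I f" "x \<in> I" "z \<in> I" "x < y" "y < z"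
  shows "(f y - f x) / (y - x) \<le> (f z - f y) / (z - y)"
proof -
  have "(f x - f y) / (x - y) \<le> (f y - f z) / (y - z)"
    using convex_on_slope_le[OF assms] by linarith
  then show ?thesis
    by (metis minus_diff_eq minus_divide_divide)
qed

lemma convex_on_ge_secant_left:
  assumes f: "convex_on {a..b} f" and pts: "a \<le> t" "t \<le> q" "q < r" "r \<le> b"
  shows "secant f q r t \<le> f t"
proof (cases "t = q")
  case False
  define s where "s = (f r - f q) / (r - q)"
  have "(f q - f t) / (q - t) \<le> s"
    unfolding s_def using pts False by (intro convex_on_slope_mono[OF f]) auto
  then have "f q - f t \<le> s * (q - t)"
    using pts False by (simp add: pos_divide_le_eq)
  then show ?thesis
    unfolding secant_def s_def[symmetric] by (simp add: algebra_simps)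
qed (simp add: secant_def)

lemma convex_on_ge_secant_right:
  assumes f: "convex_on {a..b} f" and pts: "a \<le> l" "l < p" "p \<le> t" "t \<le> b"
  shows "secant f l p t \<le> f t"
proof -
  have "secant f l p t = f p + (f p - f l) / (p - l) * (t - p)"
    unfolding secant_def using pts by (simp add: field_simps)
  also have "\<dots> \<le> f t"
  proof (cases "t = p")
    case False
    then have "(f p - f l) / (p - l) \<le> (f t - f p) / (t - p)"
      using pts by (intro convex_on_slope_mono[OF f]) auto
    then show ?thesis
      using pts False by (simp add: pos_le_divide_eq algebra_simps)
  qed simp
  finally show ?thesis .
qed

lemma convex_on_secant_bound:
  fixes v :: real
  assumes f: "convex_on {l..r} f" and pts: "l < p" "p \<le> t" "t < q" "q < r"
  shows "\<bar>f t - v\<bar> \<le> max \<bar>secant f p q t - v\<bar> (min \<bar>secant f q r t - v\<bar> \<bar>secant f l p t - v\<bar>)"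
proof -
  have "f t \<le> secant f p q t"
    using pts by (intro convex_on_le_secant convex_on_subset[OF f]) auto
  moreover have "secant f q r t \<le> f t"
    using pts by (intro convex_on_ge_secant_left[OF f]) auto
  moreover have "secant f l p t \<le> f t"
    using pts by (intro convex_on_ge_secant_right[OF f]) auto
  ultimately show ?thesis
    by (auto simp: max_def min_def abs_if)
qed

lemma secant_bound:
  fixes v :: real
  assumes pts: "l < p" "p \<le> t" "t < q" "q < r"
    and shape: "convex_on {l..r} f \<or> convex_on {l..r} (\<lambda>x. - f x)
      \<or> convex_on {p..q} f \<and> convex_on {p..q} (\<lambda>x. - f x)"
  shows "\<bar>f t - v\<bar> \<le> max \<bar>secant f p q t - v\<bar> (min \<bar>secant f q r t - v\<bar> \<bar>secant f l p t - v\<bar>)"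
  using shape
proof (elim disjE conjE)
  assume "convex_on {l..r} f"
  then show ?thesis
    using convex_on_secant_bound pts by blast
next
  assume "convex_on {l..r} (\<lambda>x. - f x)"
  then show ?thesis
    using convex_on_secant_bound[of l r "\<lambda>x. - f x" p t q "- v"] pts
    unfolding secant_uminus by (simp add: abs_minus_commute)
next
  assume "convex_on {p..q} f" "convex_on {p..q} (\<lambda>x. - f x)"
  then have "f t = secant f p q t"
    using convex_on_le_secant[of p q f t] convex_on_le_secant[of p q "\<lambda>x. - f x" t] pts
    unfolding secant_uminus by simp
  then show ?thesis
    by simp
qed

section \<open>Data in the unit interval\<close>

locale unit_interval_data =
  fixes n :: nat and xs :: "nat \<Rightarrow> real"
  assumes two_le_n: "2 \<le> n" and pos: "0 < xs 1" and lt1: "xs n < 1"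
    and incr: "\<And>i. 1 \<le> i \<Longrightarrow> i < n \<Longrightarrow> xs i < xs (Suc i)"
begin

abbreviation data :: "real set" where
  "data \<equiv> xs ` {1..n}"

lemma xs_less: "1 \<le> i \<Longrightarrow> i < j \<Longrightarrow> j \<le> n \<Longrightarrow> xs i < xs j"
proof (induction j)
  case (Suc j)
  then show ?case
    using incr[of j] by (cases "i = j") auto
qed simp

lemma xs_le: "1 \<le> i \<Longrightarrow> i \<le> j \<Longrightarrow> j \<le> n \<Longrightarrow> xs i \<le> xs j"
  using xs_less[of i j] by (cases "i = j") auto

lemma xs_in_unit_interval: "1 \<le> k \<Longrightarrow> k \<le> n \<Longrightarrow> 0 < xs k \<and> xs k < 1"
  using xs_le[of 1 k] xs_le[of k n] pos lt1 by auto

lemma data_gap: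
  assumes "1 \<le> j" "j < n"
  shows "data \<inter> {xs j<..<xs (Suc j)} = {}"
proof -
  have "xs k \<le> xs j \<or> xs (Suc j) \<le> xs k" if "k \<in> {1..n}" for k
    using that assms xs_le[of k j] xs_le[of "Suc j" k] by (cases "k \<le> j") auto
  then show ?thesis
    by fastforce
qed

lemma gap_lt_1: "1 \<le> j \<Longrightarrow> j < n \<Longrightarrow> xs (Suc j) - xs j < 1"
  using xs_in_unit_interval[of j] xs_in_unit_interval[of "Suc j"] by simp

lemma data_first_gap: "data \<subseteq> insert (xs 1) {xs 2..}"
proof -
  have "xs k \<in> insert (xs 1) {xs 2..}" if "k \<in> {1..n}" for k
    using that xs_le[of 2 k] by (cases "k = 1") auto
  then show ?thesis
    by blast
qed

lemma data_last_gap: "data \<subseteq> insert (xs n) {..xs (n - 1)}"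
proof -
  have "xs k \<in> insert (xs n) {..xs (n - 1)}" if "k \<in> {1..n}" for k
  proof (cases "k = n")
    case False
    then have "k \<le> n - 1"
      using that by (simp add: le_diff_conv2)
    then show ?thesis
      using that xs_le[of k "n - 1"] by simp
  qed simp
  then show ?thesis
    by blast
qed

lemma optimal_spline_kinks_ge:
  assumes opt: "optimal_spline data J S" and "J \<sigma> \<noteq> 0"
  shows "xs 2 \<le> \<sigma>"
proof (rule ccontr)
  assume "\<not> xs 2 \<le> \<sigma>"
  then consider "\<sigma> \<le> xs 1" | "xs 1 < \<sigma>" "\<sigma> < xs 2"
    by linarith
  then show False
  proof cases
    case 1
    then have "\<forall>x\<in>data. \<sigma> \<le> x"
      using xs_le[of 1] by fastforce
    then show False
      using optimal_spline_kink_outside_hull[OF opt] \<open>J \<sigma> \<noteq> 0\<close> by blast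
  next
    case 2
    then show False
      using optimal_spline_kink_first_gap[OF opt _ 2 data_first_gap] pos \<open>J \<sigma> \<noteq> 0\<close> by simp
  qed
qed

lemma optimal_spline_kinks_le:
  assumes opt: "optimal_spline data J S" and "J \<sigma> \<noteq> 0"
  shows "\<sigma> \<le> xs (n - 1)"
proof (rule ccontr)
  assume "\<not> \<sigma> \<le> xs (n - 1)"
  then consider "xs n \<le> \<sigma>" | "xs (n - 1) < \<sigma>" "\<sigma> < xs n"
    by linarith
  then show False
  proof cases
    case 1
    then have "\<forall>x\<in>data. x \<le> \<sigma>"
      using xs_le[of _ n] by fastforce
    then show False
      using optimal_spline_kink_outside_hull[OF opt] \<open>J \<sigma> \<noteq> 0\<close> by blast
  next
    case 2
    have "1 \<le> n - 1"
      using two_le_n by arith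
    then have "0 \<le> xs (n - 1)"
      using xs_in_unit_interval[of "n - 1"] by simp
    then show False
      using optimal_spline_kink_last_gap[OF opt _ 2 data_last_gap] \<open>J \<sigma> \<noteq> 0\<close> by simp
  qed
qed

lemma optimal_spline_window_nonneg:
  assumes opt: "optimal_spline data J S" and j: "2 \<le> j" "j < n"
    and \<sigma>: "\<sigma> \<in> {xs (j - 1)<..<xs (Suc j)}" and pos: "0 < J \<sigma>"
  shows "\<forall>\<tau>\<in>{xs (j - 1)<..<xs (Suc j)}. 0 \<le> J \<tau>"
proof
  fix \<tau> assume \<tau>: "\<tau> \<in> {xs (j - 1)<..<xs (Suc j)}"
  have j1: "Suc (j - 1) = j"
    using j by simp
  show "0 \<le> J \<tau>"
  proof (rule optimal_spline_window_sign[OF opt _ _ _ _ _ _ \<sigma> \<tau> pos])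
    show "xs (j - 1) < xs j" "xs j < xs (Suc j)"
      using incr[of "j - 1"] incr[of j] j j1 by simp_all
    show "xs j - xs (j - 1) < 1" "xs (Suc j) - xs j < 1"
      using gap_lt_1[of "j - 1"] gap_lt_1[of j] j j1 by simp_all
    show "data \<inter> {xs (j - 1)<..<xs j} = {}" "data \<inter> {xs j<..<xs (Suc j)} = {}"
      using data_gap[of "j - 1"] data_gap[of j] j j1 by simp_all
  qed
qed

lemma optimal_spline_cell_shape:
  assumes opt: "optimal_spline data J S" and i: "2 \<le> i" "Suc (Suc i) \<le> n"
    and f: "f = (\<lambda>x. \<alpha> * x + \<beta> + spline J S x)"
  shows "convex_on {xs (i - 1)..xs (Suc (Suc i))} f \<or> convex_on {xs (i - 1)..xs (Suc (Suc i))} (\<lambda>x. - f x)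
    \<or> convex_on {xs i..xs (Suc i)} f \<and> convex_on {xs i..xs (Suc i)} (\<lambda>x. - f x)"
proof -
  have S: "finite S"
    using opt unfolding optimal_spline_def by simp
  have neg_f: "(\<lambda>x. - f x) = (\<lambda>x. (- \<alpha>) * x + (- \<beta>) + spline (\<lambda>\<sigma>. - J \<sigma>) S x)"
    unfolding f spline_uminus by auto
  have one_sign: "\<forall>\<tau>\<in>{xs (i - 1)<..<xs (Suc (Suc i))}. 0 \<le> K \<tau>"
    if K: "optimal_spline data K S" and \<sigma>: "\<sigma> \<in> {xs i<..<xs (Suc i)}" and "0 < K \<sigma>" for K \<sigma>
  proof
    fix \<tau> assume \<tau>: "\<tau> \<in> {xs (i - 1)<..<xs (Suc (Suc i))}"
    have "xs (i - 1) < xs i"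
      using incr[of "i - 1"] i by simp
    then have "\<forall>\<tau>\<in>{xs (i - 1)<..<xs (Suc i)}. 0 \<le> K \<tau>"
      using optimal_spline_window_nonneg[OF K, of i \<sigma>] i \<sigma> \<open>0 < K \<sigma>\<close> by simp
    moreover have "xs (Suc i) < xs (Suc (Suc i))"
      using incr[of "Suc i"] i by simp
    then have "\<forall>\<tau>\<in>{xs i<..<xs (Suc (Suc i))}. 0 \<le> K \<tau>"
      using optimal_spline_window_nonneg[OF K, of "Suc i" \<sigma>] i \<sigma> \<open>0 < K \<sigma>\<close> by simp
    ultimately show "0 \<le> K \<tau>"
      using \<tau> incr[of i] i by (cases "\<tau> < xs (Suc i)") auto
  qed
  consider \<sigma> where "\<sigma> \<in> {xs i<..<xs (Suc i)}" "0 < J \<sigma>" | \<sigma> where "\<sigma> \<in> {xs i<..<xs (Suc i)}" "J \<sigma> < 0"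
    | "\<forall>\<sigma>\<in>{xs i<..<xs (Suc i)}. J \<sigma> = 0"
    by (meson linorder_neqE_linordered_idom)
  then show ?thesis
  proof cases
    case 1
    then show ?thesis
      using convex_on_affine_spline[OF S one_sign[OF opt 1]] unfolding f by blast
  next
    case 2
    then show ?thesis
      using convex_on_affine_spline[OF S one_sign[OF optimal_spline_uminus[OF opt], of \<sigma>], of "- \<alpha>" "- \<beta>"]
      unfolding neg_f by simp
  next
    case 3
    then show ?thesis
      using convex_on_affine_spline[OF S, of "xs i" "xs (Suc i)" J \<alpha> \<beta>]
        convex_on_affine_spline[OF S, of "xs i" "xs (Suc i)" "\<lambda>\<sigma>. - J \<sigma>" "- \<alpha>" "- \<beta>"]
      unfolding neg_f unfolding f by simp
  qed
qed

lemma optimal_spline_interior_bound: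
  fixes v :: real
  assumes opt: "optimal_spline data J S" and i: "2 \<le> i" "Suc (Suc i) \<le> n"
    and t: "xs i \<le> t" "t < xs (Suc i)" and f: "f = (\<lambda>x. \<alpha> * x + \<beta> + spline J S x)"
  shows "\<bar>f t - v\<bar> \<le> max \<bar>secant f (xs i) (xs (Suc i)) t - v\<bar>
    (min \<bar>secant f (xs (Suc i)) (xs (Suc (Suc i))) t - v\<bar> \<bar>secant f (xs (i - 1)) (xs i) t - v\<bar>)"
proof (rule secant_bound)
  show "xs (i - 1) < xs i" "xs (Suc i) < xs (Suc (Suc i))"
    using incr[of "i - 1"] incr[of "Suc i"] i by simp_all
qed (use t optimal_spline_cell_shape[OF opt i f] in simp_all)

lemma optimal_spline_left_end:
  assumes opt: "optimal_spline data J S" and t: "t < xs 2" and f: "f = (\<lambda>x. \<alpha> * x + \<beta> + spline J S x)"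
  shows "f t = secant f (xs 1) (xs 2) t"
proof -
  have "f x = \<alpha> * x + \<beta>" if "x \<le> xs 2" for x
    unfolding f using spline_left_of_kinks[OF _ that] optimal_spline_kinks_ge[OF opt] by auto
  moreover have "xs 1 < xs 2"
    using xs_less[of 1 2] two_le_n by simp
  ultimately show ?thesis
    using t by (intro secant_of_affine[symmetric]) auto
qed

lemma optimal_spline_right_end:
  assumes opt: "optimal_spline data J S" and t: "xs (n - 1) \<le> t"
    and f: "f = (\<lambda>x. \<alpha> * x + \<beta> + spline J S x)"
  shows "f t = secant f (xs (n - 1)) (xs n) t"
proof -
  have "f x = (\<alpha> + (\<Sum>\<sigma>\<in>S. J \<sigma>)) * x + (\<beta> - (\<Sum>\<sigma>\<in>S. J \<sigma> * \<sigma>))" if "xs (n - 1) \<le> x" for x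
    unfolding f using spline_right_of_kinks[OF _ that] optimal_spline_kinks_le[OF opt]
    by (auto simp: algebra_simps)
  moreover have "xs (n - 1) < xs n"
    using incr[of "n - 1"] two_le_n by simp
  ultimately show ?thesis
    using t by (intro secant_of_affine[symmetric]) auto
qed

end

lemma seg_line_eq_secant:
  "ys j = f (xs j) \<Longrightarrow> ys (Suc j) = f (xs (Suc j)) \<Longrightarrow> seg_line xs ys j t = secant f (xs j) (xs (Suc j)) t"
  unfolding seg_line_def secant_def by simp

theorem lemma8:
  fixes n :: nat and xs ys :: "nat \<Rightarrow> real"
    and fstar fhat :: "real \<Rightarrow> real"
  assumes n2: "2 \<le> n"
    and pos: "0 < xs 1" and lt1: "xs n < 1"
    and incr: "\<And>i. 1 \<le> i \<Longrightarrow> i < n \<Longrightarrow> xs i < xs (Suc i)"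
    and fhat: "min_norm_interpolant n xs ys fhat"
  shows "(\<forall>i\<in>{2..n-2}. \<forall>t. xs i \<le> t \<and> t < xs (Suc i) \<longrightarrow>
            \<bar>fhat t - fstar t\<bar> \<le> max \<bar>seg_line xs ys i t - fstar t\<bar>
               (min \<bar>seg_line xs ys (Suc i) t - fstar t\<bar> \<bar>seg_line xs ys (i - 1) t - fstar t\<bar>))
       \<and> (\<forall>t. 0 \<le> t \<and> t < xs 2 \<longrightarrow> \<bar>fhat t - fstar t\<bar> = \<bar>seg_line xs ys 1 t - fstar t\<bar>)
       \<and> (\<forall>t. xs (n - 1) \<le> t \<and> t \<le> 1 \<longrightarrow> \<bar>fhat t - fstar t\<bar> = \<bar>seg_line xs ys (n - 1) t - fstar t\<bar>)"
proof -
  interpret unit_interval_data n xs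
    using n2 pos lt1 incr by unfold_locales
  obtain J S \<alpha> \<beta> where opt: "optimal_spline data J S"
    and f: "fhat = (\<lambda>x. \<alpha> * x + \<beta> + spline J S x)" and ys: "\<forall>k\<in>{1..n}. ys k = fhat (xs k)"
    using min_norm_interpolant_optimal_spline[OF fhat] by blast
  have seg: "seg_line xs ys j t = secant fhat (xs j) (xs (Suc j)) t" if "1 \<le> j" "j < n" for j t
    using ys that by (intro seg_line_eq_secant) auto
  show ?thesis
  proof (intro conjI ballI allI impI)
    fix i t
    assume "i \<in> {2..n-2}" and t: "xs i \<le> t \<and> t < xs (Suc i)"
    then have i: "2 \<le> i" "Suc (Suc i) \<le> n" "1 \<le> i - 1" "Suc (i - 1) = i"
      by auto
    then show "\<bar>fhat t - fstar t\<bar> \<le> max \<bar>seg_line xs ys i t - fstar t\<bar>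
      (min \<bar>seg_line xs ys (Suc i) t - fstar t\<bar> \<bar>seg_line xs ys (i - 1) t - fstar t\<bar>)"
      using optimal_spline_interior_bound[OF opt i(1,2) _ _ f] t seg[of i t] seg[of "Suc i" t] seg[of "i - 1" t]
      by simp
  next
    fix t
    assume "0 \<le> t \<and> t < xs 2"
    then show "\<bar>fhat t - fstar t\<bar> = \<bar>seg_line xs ys 1 t - fstar t\<bar>"
      using optimal_spline_left_end[OF opt _ f] seg[of 1 t] n2 by (simp add: numeral_2_eq_2)
  next
    fix t
    assume "xs (n - 1) \<le> t \<and> t \<le> 1"
    then show "\<bar>fhat t - fstar t\<bar> = \<bar>seg_line xs ys (n - 1) t - fstar t\<bar>"
      using optimal_spline_right_end[OF opt _ f] seg[of "n - 1" t] n2 by simp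
  qed
qed

end
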